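(* Let $\lambda_1>0$ and $\lambda_2<0$ be real numbers and $L=(D-\lambda_1)(D-\lambda_2)$. There exists a constant $C(\lambda_1,\lambda_2)$, depending only on $\lambda_1,\lambda_2$ and not on the segment, such that for every segment $[a,b]$ and every partition $\Delta$ of $[a,b]$, \[ \|P_{\mathbb{S}(L,\Delta)}\|_{C[a,b]\to C[a,b]}\le C(\lambda_1,\lambda_2). \]
   Context: A partition of $[a,b]$ is $\Delta=\{a=t_1<t_2<\dots<t_n=b\}$ ($n\ge 2$), with subsegments $\Delta_i=[t_i,t_{i+1}]$. The space of $L$-splines $\mathbb{S}(L,\Delta)$ consists of the continuous functions $s$ on $[a,b]$ such that on each $\Delta_i$, $s$ satisfies $Ls=0$, i.e. $s|_{\Delta_i}$ is a linear combination of $e^{\lambda_1x}$ and $e^{\lambda_2x}$. $P_{\mathbb{S}(L,\Delta)}:C[a,b]\to\mathbb{S}(L,\Delta)$ is the orthogonal projection with respect to the $L_2[a,b]$ inner product (i.e. $\langle f,s\rangle=\langle Pf,s\rangle$ for all splines $s$); its norm is $\sup\{\|Pf\|_\infty: f\in C[a,b],\ \|f\|_\infty\le 1\}$. *)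

theory Defs
  imports "HOL-Analysis.Analysis"
begin

definition is_partition :: "real \<Rightarrow> real \<Rightarrow> real list \<Rightarrow> bool" where
  "is_partition a b ts \<longleftrightarrow> length ts \<ge> 2 \<and> sorted_wrt (<) ts \<and> hd ts = a \<and> last ts = b"

definition L_splines :: "real \<Rightarrow> real \<Rightarrow> real \<Rightarrow> real \<Rightarrow> real list \<Rightarrow> (real \<Rightarrow> real) set" where
  "L_splines l1 l2 a b ts = {s. continuous_on {a..b} s \<and>
     (\<forall>i. Suc i < length ts \<longrightarrow> (\<exists>c1 c2. \<forall>x\<in>{ts!i..ts!Suc i}.
         s x = c1 * exp (l1 * x) + c2 * exp (l2 * x)))}"

definition is_spline_proj :: "real \<Rightarrow> real \<Rightarrow> real \<Rightarrow> real \<Rightarrow> real list \<Rightarrow> (real \<Rightarrow> real) \<Rightarrow> (real \<Rightarrow> real) \<Rightarrow> bool" where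
  "is_spline_proj l1 l2 a b ts f s \<longleftrightarrow> s \<in> L_splines l1 l2 a b ts \<and>
     (\<forall>g \<in> L_splines l1 l2 a b ts.
        integral {a..b} (\<lambda>x. f x * g x) = integral {a..b} (\<lambda>x. s x * g x))"

text \<open>The projection operator (functions are identified by their values on [a,b];
  outside [a,b] the value is set to 0 so that the projection is a unique function).\<close>
definition spline_proj :: "real \<Rightarrow> real \<Rightarrow> real \<Rightarrow> real \<Rightarrow> real list \<Rightarrow> (real \<Rightarrow> real) \<Rightarrow> (real \<Rightarrow> real)" where
  "spline_proj l1 l2 a b ts f = (THE s. is_spline_proj l1 l2 a b ts f s \<and> (\<forall>x. x \<notin> {a..b} \<longrightarrow> s x = 0))"

end

theory Submission
  imports Defs
begin

(* Write the projection in the nodal basis N_0, ..., N_m of the spline space (N_j (t_k) = delta_jk).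
   Its coefficient vector v solves the tridiagonal Gram system  G v = (int f N_j)_j,  whose
   off-diagonal entries are nonnegative. On a subinterval [t,u] the two restricted basis functions
   phi_t, phi_u satisfy, whatever the length u - t,
     int phi_t^2 - int phi_t phi_u > l1 / (3 (l1 - l2)) int phi_t,
     int phi_u^2 - int phi_t phi_u > -l2 / (3 (l1 - l2)) int phi_u,
   so every row of G is diagonally dominant by c int N_j with c = min l1 (-l2) / (3 (l1 - l2)).
   Since |int f N_j| <= int N_j for |f| <= 1, the row in which |v_j| is maximal gives |v_j| <= 1/c,
   and as the local basis functions take values in [0,1], |P f| <= 2/c on every mesh.
   The interval inequality becomes, after computing the integrals in closed form, the positivity of
   an exponential polynomial in u - t, which is certified by a chain of first-order differential
   inequalities; the second one follows from the first by reflecting the interval. *)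

section \<open>A positivity certificate\<close>

definition expint :: "real \<Rightarrow> real \<Rightarrow> real" where
  "expint c x = (if c = 0 then x else (exp (c * x) - 1) / c)"

lemma expint_0 [simp]: "expint c 0 = 0"
  by (simp add: expint_def)

lemma has_real_derivative_expint [derivative_intros]:
  assumes "(f has_real_derivative f') (at x within S)"
    and "D = exp (p * f x) * exp (- q * f x) * f'"
  shows "((\<lambda>x. expint (p - q) (f x)) has_real_derivative D) (at x within S)"
proof -
  have "exp ((p - q) * f x) = exp (p * f x) * exp (- q * f x)"
    by (simp add: mult_exp_exp algebra_simps)
  then show ?thesis
    using assms unfolding expint_def
    by (cases "p = q") (auto intro!: derivative_eq_intros)
qed

(* With P = exp (p h), R = exp (-q h) and J = expint (p - q) h, gap0 p q h equals 6 p q (p + q) (P - R)^2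
   times the first interval inequality's gap for the exponents p, -q on an interval of length h
   (gap0_eq_gram_gap). The functions gap1, ..., gap7 certify its positivity: gap_k' = gap_(k+1) + mu_k gap_k,
   gap_k 0 >= 0 and gap7 > 0. *)
definition gap0 :: "real \<Rightarrow> real \<Rightarrow> real \<Rightarrow> real" where
  "gap0 p q x = (let P = exp (p*x); R = exp (- q*x); J = expint (p - q) x in
    (- 3*q*q - 3*p*q)*R + (- 6*p*q*q - 6*p*p*q)*R*J + (- 3*q*q - p*q)*R*R + (3*p*q + 3*p*p)*P
    + (- 6*p*q*q - 6*p*p*q)*P*J + (- 2*p*q + 2*p*p)*P*R + (- 12*p*q*q - 12*p*p*q)*P*R*J
    + (- 5*p*q - 5*p*p)*P*R*R + (3*p*q + p*p)*P*P + (3*q*q + 5*p*q + 2*p*p)*P*P*R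
    + (3*q*q - 3*p*p)*P*P*R*R)"

definition gap1 :: "real \<Rightarrow> real \<Rightarrow> real \<Rightarrow> real" where
  "gap1 p q x = (let P = exp (p*x); R = exp (- q*x); J = expint (p - q) x in
    (- 3*q*q*q - 3*p*q*q)*R + (- 6*p*q*q*q - 6*p*p*q*q)*R*J + (6*p*q*q + 9*p*p*q + 3*p*p*p)*P
    + (- 12*p*q*q*q - 18*p*p*q*q - 6*p*p*p*q)*P*J + (- 2*p*q*q + 2*p*p*p)*P*R
    + (- 12*p*q*q*q - 24*p*p*q*q - 12*p*p*p*q)*P*R*J + (- 6*p*q*q - 11*p*p*q - 5*p*p*p)*P*R*R
    + (6*p*q*q + 8*p*p*q + 2*p*p*p)*P*P + (3*q*q*q + 5*p*q*q + 6*p*p*q + 4*p*p*p)*P*P*R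
    + (- 6*p*q*q - 12*p*p*q - 6*p*p*p)*P*P*R*R)"

definition gap2 :: "real \<Rightarrow> real \<Rightarrow> real \<Rightarrow> real" where
  "gap2 p q x = (let P = exp (p*x); R = exp (- q*x); J = expint (p - q) x in
    (- 3*q*q*q*q + 3*p*p*q*q)*R + (- 6*p*q*q*q*q + 6*p*p*p*q*q)*R*J
    + (12*p*q*q*q + 18*p*p*q*q + 6*p*p*p*q)*P + (- 24*p*q*q*q*q - 36*p*p*q*q*q - 12*p*p*p*q*q)*P*J
    + (- 2*p*q*q*q + 2*p*p*p*q)*P*R + (- 12*p*q*q*q*q - 24*p*p*q*q*q - 12*p*p*p*q*q)*P*R*J
    + (- 6*p*q*q*q - 6*p*p*q*q)*P*R*R + (12*p*q*q*q + 22*p*p*q*q + 12*p*p*p*q + 2*p*p*p*p)*P*P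
    + (3*q*q*q*q - 4*p*q*q*q - 7*p*p*q*q + 4*p*p*p*q + 4*p*p*p*p)*P*P*R
    + (- 12*p*q*q*q - 30*p*p*q*q - 24*p*p*p*q - 6*p*p*p*p)*P*P*R*R)"

definition gap3 :: "real \<Rightarrow> real \<Rightarrow> real \<Rightarrow> real" where
  "gap3 p q x = (let P = exp (p*x); R = exp (- q*x); J = expint (p - q) x in
    (12*p*q*q*q*q + 30*p*p*q*q*q + 24*p*p*p*q*q + 6*p*p*p*p*q)*P
    + (- 24*p*q*q*q*q*q - 60*p*p*q*q*q*q - 48*p*p*p*q*q*q - 12*p*p*p*p*q*q)*P*J
    + (- 2*p*p*q*q*q + 2*p*p*p*p*q)*P*R + (- 12*p*p*q*q*q*q - 24*p*p*p*q*q*q - 12*p*p*p*p*q*q)*P*R*J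
    + (12*p*q*q*q*q + 46*p*p*q*q*q + 56*p*p*p*q*q + 26*p*p*p*p*q + 4*p*p*p*p*p)*P*P
    + (- 18*p*q*q*q*q - 44*p*p*q*q*q - 26*p*p*p*q*q + 8*p*p*p*p*q + 8*p*p*p*p*p)*P*P*R
    + (- 18*p*p*q*q*q - 48*p*p*p*q*q - 42*p*p*p*p*q - 12*p*p*p*p*p)*P*P*R*R)"

definition gap4 :: "real \<Rightarrow> real \<Rightarrow> real \<Rightarrow> real" where
  "gap4 p q x = (let P = exp (p*x); R = exp (- q*x); J = expint (p - q) x in
    (24*p*q*q*q*q*q + 48*p*p*q*q*q*q + 18*p*p*p*q*q*q - 12*p*p*p*p*q*q - 6*p*p*p*p*p*q)*P
    + (- 48*p*q*q*q*q*q*q - 96*p*p*q*q*q*q*q - 36*p*p*p*q*q*q*q + 24*p*p*p*p*q*q*q + 12*p*p*p*p*p*q*q)*P*J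
    + (- 2*p*p*q*q*q*q + 2*p*p*p*q*q*q + 2*p*p*p*p*q*q - 2*p*p*p*p*p*q)*P*R
    + (- 12*p*p*q*q*q*q*q - 12*p*p*p*q*q*q*q + 12*p*p*p*p*q*q*q + 12*p*p*p*p*p*q*q)*P*R*J
    + (24*p*q*q*q*q*q + 92*p*p*q*q*q*q + 112*p*p*p*q*q*q + 52*p*p*p*p*q*q + 8*p*p*p*p*p*q)*P*P
    + (- 42*p*q*q*q*q*q - 104*p*p*q*q*q*q - 74*p*p*p*q*q*q - 4*p*p*p*p*q*q + 8*p*p*p*p*p*q)*P*P*R
    + (- 12*p*p*q*q*q*q - 24*p*p*p*q*q*q - 12*p*p*p*p*q*q)*P*P*R*R)"

definition gap5 :: "real \<Rightarrow> real \<Rightarrow> real \<Rightarrow> real" where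
  "gap5 p q x = (let P = exp (p*x); R = exp (- q*x); J = expint (p - q) x in
    (24*p*q*q*q*q*q*q + 48*p*p*q*q*q*q*q + 18*p*p*p*q*q*q*q - 12*p*p*p*p*q*q*q - 6*p*p*p*p*p*q*q)*P
    + (- 48*p*q*q*q*q*q*q*q - 96*p*p*q*q*q*q*q*q - 36*p*p*p*q*q*q*q*q + 24*p*p*p*p*q*q*q*q + 12*p*p*p*p*p*q*q*q)*P*J
    + (24*p*q*q*q*q*q*q + 116*p*p*q*q*q*q*q + 204*p*p*p*q*q*q*q + 164*p*p*p*p*q*q*q + 60*p*p*p*p*p*q*q + 8*p*p*p*p*p*p*q)*P*P
    + (- 48*p*q*q*q*q*q*q - 138*p*p*q*q*q*q*q - 140*p*p*p*q*q*q*q - 50*p*p*p*p*q*q*q + 8*p*p*p*p*p*q*q + 8*p*p*p*p*p*p*q)*P*P*R)"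

definition gap6 :: "real \<Rightarrow> real \<Rightarrow> real \<Rightarrow> real" where
  "gap6 p q x = (let P = exp (p*x); R = exp (- q*x); J = expint (p - q) x in
    (24*p*q*q*q*q*q*q*q + 24*p*p*q*q*q*q*q*q - 30*p*p*p*q*q*q*q*q - 30*p*p*p*p*q*q*q*q + 6*p*p*p*p*p*q*q*q + 6*p*p*p*p*p*p*q*q)*P
    + (- 48*p*q*q*q*q*q*q*q*q - 48*p*p*q*q*q*q*q*q*q + 60*p*p*p*q*q*q*q*q*q + 60*p*p*p*p*q*q*q*q*q - 12*p*p*p*p*p*q*q*q*q - 12*p*p*p*p*p*p*q*q*q)*P*J
    + (24*p*q*q*q*q*q*q*q + 116*p*p*q*q*q*q*q*q + 204*p*p*p*q*q*q*q*q + 164*p*p*p*p*q*q*q*q + 60*p*p*p*p*p*q*q*q + 8*p*p*p*p*p*p*q*q)*P*P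
    + (- 48*p*q*q*q*q*q*q*q - 96*p*p*q*q*q*q*q*q - 36*p*p*p*q*q*q*q*q + 24*p*p*p*p*q*q*q*q + 12*p*p*p*p*p*q*q*q)*P*P*R)"

definition gap7 :: "real \<Rightarrow> real \<Rightarrow> real \<Rightarrow> real" where
  "gap7 p q x = (let P = exp (p*x); R = exp (- q*x); J = expint (p - q) x in
    (24*p*p*q*q*q*q*q*q*q + 116*p*p*p*q*q*q*q*q*q + 204*p*p*p*p*q*q*q*q*q + 164*p*p*p*p*p*q*q*q*q + 60*p*p*p*p*p*p*q*q*q + 8*p*p*p*p*p*p*p*q*q)*P*P)"

lemma gap_derivative_chain:
  "(gap0 p q has_real_derivative gap1 p q x + (- 2*q) * gap0 p q x) (at x)"
  "(gap1 p q has_real_derivative gap2 p q x + (p - 2*q) * gap1 p q x) (at x)"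
  "(gap2 p q has_real_derivative gap3 p q x + (- q) * gap2 p q x) (at x)"
  "(gap3 p q has_real_derivative gap4 p q x + (2*p - 2*q) * gap3 p q x) (at x)"
  "(gap4 p q has_real_derivative gap5 p q x + (p - q) * gap4 p q x) (at x)"
  "(gap5 p q has_real_derivative gap6 p q x + (2*p - q) * gap5 p q x) (at x)"
  "(gap6 p q has_real_derivative gap7 p q x + p * gap6 p q x) (at x)"
  unfolding gap0_def gap1_def gap2_def gap3_def gap4_def gap5_def gap6_def gap7_def Let_def
  by ((rule derivative_eq_intros refl)+, simp add: algebra_simps)+

lemma gap_at_0:
  "gap0 p q 0 = 0" "gap1 p q 0 = 0" "gap2 p q 0 = 0"
  "gap3 p q 0 = 6*p*q*q*q*q + 12*p*p*q*q*q + 6*p*p*p*q*q"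
  "gap4 p q 0 = 6*p*q*q*q*q*q + 22*p*p*q*q*q*q + 34*p*p*p*q*q*q + 26*p*p*p*p*q*q + 8*p*p*p*p*p*q"
  "gap5 p q 0 = 26*p*p*q*q*q*q*q + 82*p*p*p*q*q*q*q + 102*p*p*p*p*q*q*q + 62*p*p*p*p*p*q*q + 16*p*p*p*p*p*p*q"
  "gap6 p q 0 = 44*p*p*q*q*q*q*q*q + 138*p*p*p*q*q*q*q*q + 158*p*p*p*p*q*q*q*q + 78*p*p*p*p*p*q*q*q + 14*p*p*p*p*p*p*q*q"
  unfolding gap0_def gap1_def gap2_def gap3_def gap4_def gap5_def gap6_def Let_def
  by (simp_all add: algebra_simps)

lemma positive_by_integrating_factor:
  fixes g g' :: "real \<Rightarrow> real"
  assumes deriv: "\<And>x. (g has_real_derivative g' x + \<mu> * g x) (at x)"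
    and "g 0 \<ge> 0" and g'_pos: "\<And>x. x > 0 \<Longrightarrow> g' x > 0" and "h > 0"
  shows "g h > 0"
proof -
  define F where "F x = exp (- \<mu> * x) * g x" for x
  have F_deriv: "(F has_real_derivative exp (- \<mu> * x) * g' x) (at x)" for x
  proof -
    have "(F has_real_derivative exp (- \<mu> * x) * (- \<mu>) * g x + exp (- \<mu> * x) * (g' x + \<mu> * g x)) (at x)"
      unfolding F_def by (auto intro!: derivative_eq_intros deriv)
    then show ?thesis by (simp add: algebra_simps)
  qed
  have F_cont: "continuous_on {0..h} F"
    using F_deriv by (meson DERIV_continuous continuous_at_imp_continuous_on)
  have "F 0 < F h"
    by (rule DERIV_pos_imp_increasing_open[OF \<open>h > 0\<close> _ F_cont])
       (metis F_deriv g'_pos exp_gt_zero mult_pos_pos)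
  then have "0 < exp (- \<mu> * h) * g h"
    using \<open>g 0 \<ge> 0\<close> by (simp add: F_def)
  then show ?thesis
    by (simp add: zero_less_mult_iff)
qed

lemma gap0_pos:
  fixes p q h :: real
  assumes "p > 0" and "q > 0" and "h > 0"
  shows "gap0 p q h > 0"
proof -
  have gap7: "gap7 p q x > 0" for x
    unfolding gap7_def Let_def using assms by (intro mult_pos_pos add_pos_pos) auto
  have gap6: "gap6 p q x > 0" if "x > 0" for x
    using positive_by_integrating_factor[OF gap_derivative_chain(7) _ gap7 that] assms by (simp add: gap_at_0)
  have gap5: "gap5 p q x > 0" if "x > 0" for x
    using positive_by_integrating_factor[OF gap_derivative_chain(6) _ gap6 that] assms by (simp add: gap_at_0)
  have gap4: "gap4 p q x > 0" if "x > 0" for x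
    using positive_by_integrating_factor[OF gap_derivative_chain(5) _ gap5 that] assms by (simp add: gap_at_0)
  have gap3: "gap3 p q x > 0" if "x > 0" for x
    using positive_by_integrating_factor[OF gap_derivative_chain(4) _ gap4 that] assms by (simp add: gap_at_0)
  have gap2: "gap2 p q x > 0" if "x > 0" for x
    using positive_by_integrating_factor[OF gap_derivative_chain(3) _ gap3 that] by (simp add: gap_at_0)
  have gap1: "gap1 p q x > 0" if "x > 0" for x
    using positive_by_integrating_factor[OF gap_derivative_chain(2) _ gap2 that] by (simp add: gap_at_0)
  show ?thesis
    using positive_by_integrating_factor[OF gap_derivative_chain(1) _ gap1 \<open>h > 0\<close>] by (simp add: gap_at_0)
qed

section \<open>The local basis on a subinterval\<close>

(* The pieces on [t,u] of the nodal basis functions attached to t and to u: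
   combinations of exp (l1 x) and exp (l2 x) with values 1, 0 resp. 0, 1 at the endpoints. *)
definition phi_t :: "real \<Rightarrow> real \<Rightarrow> real \<Rightarrow> real \<Rightarrow> real \<Rightarrow> real" where
  "phi_t l1 l2 t u x =
     (exp (l1*(u-t)) * exp (l2*(x-t)) - exp (l2*(u-t)) * exp (l1*(x-t))) / (exp (l1*(u-t)) - exp (l2*(u-t)))"

definition phi_u :: "real \<Rightarrow> real \<Rightarrow> real \<Rightarrow> real \<Rightarrow> real \<Rightarrow> real" where
  "phi_u l1 l2 t u x = (exp (l1*(x-t)) - exp (l2*(x-t))) / (exp (l1*(u-t)) - exp (l2*(u-t)))"

lemma phi_denom_pos:
  fixes l1 l2 t u :: real
  assumes "l1 > 0" "l2 < 0" "t < u"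
  shows "exp (l2*(u-t)) < exp (l1*(u-t))"
proof -
  have "(l1 - l2) * (u - t) > 0" by (rule mult_pos_pos) (use assms in auto)
  then show ?thesis by (simp add: algebra_simps)
qed

lemma phi_at_endpoints:
  assumes "l1 > 0" "l2 < 0" "t < u"
  shows "phi_t l1 l2 t u t = 1" "phi_t l1 l2 t u u = 0" "phi_u l1 l2 t u t = 0" "phi_u l1 l2 t u u = 1"
  using phi_denom_pos[OF assms] by (auto simp: phi_t_def phi_u_def)

lemma continuous_on_phi:
  assumes "l1 > 0" "l2 < 0" "t < u"
  shows "continuous_on S (phi_t l1 l2 t u)" "continuous_on S (phi_u l1 l2 t u)"
  unfolding phi_t_def phi_u_def using phi_denom_pos[OF assms] by (auto intro!: continuous_intros)

lemma phi_bounds: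
  assumes l: "l1 > 0" "l2 < 0" "t < u" and x: "x \<in> {t..u}"
  shows "0 \<le> phi_t l1 l2 t u x" "phi_t l1 l2 t u x \<le> 1" "0 \<le> phi_u l1 l2 t u x" "phi_u l1 l2 t u x \<le> 1"
proof -
  have D: "exp (l2*(u-t)) < exp (l1*(u-t))" by (rule phi_denom_pos[OF l])
  have "(l1 - l2) * ((u-t) - (x-t)) \<ge> 0" using l x by simp
  then have "exp (l2*(u-t)) * exp (l1*(x-t)) \<le> exp (l1*(u-t)) * exp (l2*(x-t))"
    by (simp add: mult_exp_exp algebra_simps)
  then show "0 \<le> phi_t l1 l2 t u x" unfolding phi_t_def using D by simp
  have "exp (l2*(x-t)) \<le> 1" "1 \<le> exp (l1*(x-t))" using l x by (simp_all add: mult_nonpos_nonneg)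
  then have "exp (l1*(u-t)) * exp (l2*(x-t)) - exp (l2*(u-t)) * exp (l1*(x-t)) \<le> exp (l1*(u-t)) - exp (l2*(u-t))"
    by (smt (verit) exp_gt_zero mult_left_le mult_le_cancel_left1)
  then show "phi_t l1 l2 t u x \<le> 1" unfolding phi_t_def using D by simp
  have "l2*(x-t) \<le> l1*(x-t)" using l x by (intro mult_right_mono) auto
  then show "0 \<le> phi_u l1 l2 t u x" unfolding phi_u_def using D by simp
  have "exp (l1*(x-t)) \<le> exp (l1*(u-t))" "exp (l2*(u-t)) \<le> exp (l2*(x-t))"
    using l x by (simp_all add: mult_left_mono_neg)
  then have "exp (l1*(x-t)) - exp (l2*(x-t)) \<le> exp (l1*(u-t)) - exp (l2*(u-t))"
    by linarith
  then show "phi_u l1 l2 t u x \<le> 1" unfolding phi_u_def using D by (simp add: divide_le_eq_1)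
qed

lemma phi_span:
  assumes "l1 > 0" "l2 < 0" "t < u"
  shows "\<exists>c1 c2. \<forall>x. phi_t l1 l2 t u x = c1 * exp (l1*x) + c2 * exp (l2*x)"
    and "\<exists>c1 c2. \<forall>x. phi_u l1 l2 t u x = c1 * exp (l1*x) + c2 * exp (l2*x)"
proof -
  define D where "D = exp (l1*(u-t)) - exp (l2*(u-t))"
  show "\<exists>c1 c2. \<forall>x. phi_t l1 l2 t u x = c1 * exp (l1*x) + c2 * exp (l2*x)"
    by (rule exI[of _ "- exp (l2*(u-t)) * exp (- l1*t) / D"], rule exI[of _ "exp (l1*(u-t)) * exp (- l2*t) / D"])
       (unfold phi_t_def D_def[symmetric], simp add: diff_divide_distrib right_diff_distrib mult_exp_exp algebra_simps)
  show "\<exists>c1 c2. \<forall>x. phi_u l1 l2 t u x = c1 * exp (l1*x) + c2 * exp (l2*x)"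
    by (rule exI[of _ "exp (- l1*t) / D"], rule exI[of _ "- exp (- l2*t) / D"])
       (unfold phi_u_def D_def[symmetric], simp add: diff_divide_distrib right_diff_distrib mult_exp_exp algebra_simps)
qed

lemma exp_sum_interpolation:
  assumes "l1 > 0" "l2 < 0" "t < u"
    and g: "\<And>x. x \<in> {t..u} \<Longrightarrow> g x = c1 * exp (l1*x) + c2 * exp (l2*x)"
    and x: "x \<in> {t..u}"
  shows "g x = g t * phi_t l1 l2 t u x + g u * phi_u l1 l2 t u x"
proof -
  have t: "t \<in> {t..u}" and u: "u \<in> {t..u}" using x by auto
  have "exp (l1*u) * exp (l2*t) - exp (l2*u) * exp (l1*t) \<noteq> 0"
    using phi_denom_pos[OF assms(1-3)] by (simp add: right_diff_distrib exp_diff field_simps)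
  then show ?thesis
    unfolding g[OF x] g[OF t] g[OF u] phi_t_def phi_u_def right_diff_distrib exp_diff
    by (simp add: divide_simps) algebra
qed

lemma phi_reflect:
  "phi_u l1 l2 t u (t + u - x) = phi_t (- l2) (- l1) t u x"
  "phi_t l1 l2 t u (t + u - x) = phi_u (- l2) (- l1) t u x"
proof -
  define k where "k = exp (- (l1 + l2) * (u - t))"
  have k: "k \<noteq> 0" by (simp add: k_def)
  have num_u: "exp (- l2*(u-t)) * exp (- l1*(x-t)) - exp (- l1*(u-t)) * exp (- l2*(x-t))
      = k * (exp (l1*(t + u - x - t)) - exp (l2*(t + u - x - t)))"
    and num_t: "exp (- l2*(x-t)) - exp (- l1*(x-t))
      = k * (exp (l1*(u-t)) * exp (l2*(t + u - x - t)) - exp (l2*(u-t)) * exp (l1*(t + u - x - t)))"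
    and den: "exp (- l2*(u-t)) - exp (- l1*(u-t)) = k * (exp (l1*(u-t)) - exp (l2*(u-t)))"
    unfolding k_def by (simp_all add: mult_exp_exp algebra_simps)
  show "phi_u l1 l2 t u (t + u - x) = phi_t (- l2) (- l1) t u x"
    unfolding phi_t_def phi_u_def num_u den using k by simp
  show "phi_t l1 l2 t u (t + u - x) = phi_u (- l2) (- l1) t u x"
    unfolding phi_t_def phi_u_def num_t den using k by simp
qed

section \<open>Gram inequalities on a subinterval\<close>

lemma integral_reflect_interval:
  fixes f :: "real \<Rightarrow> real"
  assumes "f integrable_on {a..b}"
  shows "integral {a..b} (\<lambda>x. f (a + b - x)) = integral {a..b} f"
proof -
  have "((\<lambda>x. f ((-1) *\<^sub>R x + (a + b))) has_integral (1 / \<bar>-1\<bar> ^ DIM(real)) *\<^sub>R integral {a..b} f)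
        ((\<lambda>x. (1 / -1) *\<^sub>R x + - ((1 / -1) *\<^sub>R (a + b))) ` cbox a b)"
    by (rule has_integral_affinity) (use assms in auto)
  moreover have "(\<lambda>x. (1 / -1) *\<^sub>R x + - ((1 / -1) *\<^sub>R (a + b))) ` cbox a b = {a..b}"
    by (auto simp: image_iff intro!: bexI[where x = "a + b - _"])
  ultimately show ?thesis by (simp add: integral_unique algebra_simps)
qed

lemma integral_by_antiderivative:
  fixes F f :: "real \<Rightarrow> real"
  assumes "a \<le> b" and "\<And>x. (F has_real_derivative f x) (at x)" and "F b - F a = I"
  shows "integral {a..b} f = I"
  unfolding assms(3)[symmetric]
  by (rule integral_unique, rule fundamental_theorem_of_calculus[OF assms(1)])
     (use assms(2) in \<open>auto simp: has_real_derivative_iff_has_vector_derivative[symmetric]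
                            intro: has_field_derivative_at_within\<close>)

lemma phi_t_integrals:
  fixes p q t u :: real
  assumes "p > 0" "q > 0" "t < u"
  defines "P \<equiv> exp (p*(u-t))" and "R \<equiv> exp (- q*(u-t))" and "J \<equiv> expint (p - q) (u - t)"
  shows "(P - R) * integral {t..u} (phi_t p (- q) t u) = (P*R / (- q) - R*P / p) - (P / (- q) - R / p)"
    and "(P - R)^2 * integral {t..u} (\<lambda>x. phi_t p (- q) t u x * phi_t p (- q) t u x) =
           (P*P*R*R / (- 2*q) - 2*P*R*J + R*R*P*P / (2*p)) - (P*P / (- 2*q) + R*R / (2*p))"
    and "(P - R)^2 * integral {t..u} (\<lambda>x. phi_t p (- q) t u x * phi_u p (- q) t u x) =
           ((P + R)*J - P*R*R / (- 2*q) - R*P*P / (2*p)) - (- P / (- 2*q) - R / (2*p))"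
proof -
  define D where "D = P - R"
  have "P > 1" "R < 1" unfolding P_def R_def using assms by auto
  then have D: "D \<noteq> 0" unfolding D_def by simp
  have phi_t_eq: "phi_t p (- q) t u x = (P * exp (- q*(x-t)) - R * exp (p*(x-t))) / D" for x
    unfolding phi_t_def P_def R_def D_def by simp
  have phi_u_eq: "phi_u p (- q) t u x = (exp (p*(x-t)) - exp (- q*(x-t))) / D" for x
    unfolding phi_u_def P_def R_def D_def by simp
  have "integral {t..u} (phi_t p (- q) t u) =
      ((P*R / (- q) - R*P / p) - (P / (- q) - R / p)) / D"
    unfolding phi_t_eq
    by (rule integral_by_antiderivative[where F = "\<lambda>x. (P * exp (- q*(x-t)) / (- q) - R * exp (p*(x-t)) / p) / D"])
       (use assms D in \<open>auto intro!: derivative_eq_intros simp: P_def R_def field_simps\<close>)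
  then show "(P - R) * integral {t..u} (phi_t p (- q) t u) = (P*R / (- q) - R*P / p) - (P / (- q) - R / p)"
    using D unfolding D_def by (simp add: field_simps)
  have "integral {t..u} (\<lambda>x. phi_t p (- q) t u x * phi_t p (- q) t u x) =
      ((P*P*R*R / (- 2*q) - 2*P*R*J + R*R*P*P / (2*p)) - (P*P / (- 2*q) + R*R / (2*p))) / D^2"
    unfolding phi_t_eq
    by (rule integral_by_antiderivative[where F = "\<lambda>x. (P*P * exp (- q*(x-t)) * exp (- q*(x-t)) / (- 2*q)
          - 2*P*R * expint (p - q) (x-t) + R*R * exp (p*(x-t)) * exp (p*(x-t)) / (2*p)) / D^2"])
       (use assms D in \<open>auto intro!: derivative_eq_intros simp: P_def R_def J_def field_simps power2_eq_square\<close>)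
  then show "(P - R)^2 * integral {t..u} (\<lambda>x. phi_t p (- q) t u x * phi_t p (- q) t u x) =
           (P*P*R*R / (- 2*q) - 2*P*R*J + R*R*P*P / (2*p)) - (P*P / (- 2*q) + R*R / (2*p))"
    using D unfolding D_def by (simp add: field_simps)
  have "integral {t..u} (\<lambda>x. phi_t p (- q) t u x * phi_u p (- q) t u x) =
      (((P + R)*J - P*R*R / (- 2*q) - R*P*P / (2*p)) - (- P / (- 2*q) - R / (2*p))) / D^2"
    unfolding phi_t_eq phi_u_eq
    by (rule integral_by_antiderivative[where F = "\<lambda>x. ((P + R) * expint (p - q) (x-t)
          - P * exp (- q*(x-t)) * exp (- q*(x-t)) / (- 2*q) - R * exp (p*(x-t)) * exp (p*(x-t)) / (2*p)) / D^2"])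
       (use assms D in \<open>auto intro!: derivative_eq_intros simp: P_def R_def J_def field_simps power2_eq_square\<close>)
  then show "(P - R)^2 * integral {t..u} (\<lambda>x. phi_t p (- q) t u x * phi_u p (- q) t u x) =
           ((P + R)*J - P*R*R / (- 2*q) - R*P*P / (2*p)) - (- P / (- 2*q) - R / (2*p))"
    using D unfolding D_def by (simp add: field_simps)
qed

lemma gap0_eq_gram_gap:
  fixes p q t u :: real
  assumes "p > 0" "q > 0" "t < u"
  shows "gap0 p q (u - t) = 6*p*q*(p+q) * (exp (p*(u-t)) - exp (- q*(u-t)))^2 *
    (integral {t..u} (\<lambda>x. phi_t p (- q) t u x * phi_t p (- q) t u x)
     - integral {t..u} (\<lambda>x. phi_t p (- q) t u x * phi_u p (- q) t u x)
     - p / (3 * (p + q)) * integral {t..u} (phi_t p (- q) t u))"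
    (is "_ = 6*p*q*(p+q) * ?D^2 * (?A - ?B - _ * ?I)")
proof -
  have "p + q \<noteq> 0" using assms by simp
  then have "6*p*q*(p+q) * ?D^2 * (?A - ?B - p / (3 * (p + q)) * ?I)
      = 6*p*q*(p+q) * (?D^2 * ?A) - 6*p*q*(p+q) * (?D^2 * ?B) - 2*p*p*q * ?D * (?D * ?I)"
    by (simp add: field_simps power2_eq_square)
  also have "\<dots> = gap0 p q (u - t)"
    unfolding phi_t_integrals[OF assms] gap0_def Let_def using assms by (simp add: field_simps)
  finally show ?thesis by simp
qed

lemma phi_t_gram_gap:
  fixes l1 l2 t u :: real
  assumes "l1 > 0" "l2 < 0" "t < u"
  shows "integral {t..u} (\<lambda>x. phi_t l1 l2 t u x * phi_t l1 l2 t u x)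
           - integral {t..u} (\<lambda>x. phi_t l1 l2 t u x * phi_u l1 l2 t u x)
         > l1 / (3 * (l1 - l2)) * integral {t..u} (phi_t l1 l2 t u)"
    (is "?A - ?B > ?c * ?I")
proof -
  define k where "k = 6*l1*(- l2)*(l1 - l2) * (exp (l1*(u-t)) - exp (l2*(u-t)))^2"
  have "0 < 6*l1*(- l2)*(l1 - l2)"
    using assms by (intro mult_pos_pos) auto
  moreover have "0 < (exp (l1*(u-t)) - exp (l2*(u-t)))^2"
    by (rule zero_less_power) (use phi_denom_pos[OF assms] in simp)
  ultimately have "0 < k"
    unfolding k_def by (rule mult_pos_pos)
  have "gap0 l1 (- l2) (u - t) = k * (?A - ?B - ?c * ?I)"
    using gap0_eq_gram_gap[of l1 "- l2" t u] assms by (simp add: k_def)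
  moreover have "0 < gap0 l1 (- l2) (u - t)"
    by (rule gap0_pos) (use assms in auto)
  ultimately have "0 < ?A - ?B - ?c * ?I"
    using \<open>0 < k\<close> by (simp add: zero_less_mult_iff)
  then show ?thesis by simp
qed

lemma phi_u_gram_gap:
  fixes l1 l2 t u :: real
  assumes "l1 > 0" "l2 < 0" "t < u"
  shows "integral {t..u} (\<lambda>x. phi_u l1 l2 t u x * phi_u l1 l2 t u x)
           - integral {t..u} (\<lambda>x. phi_t l1 l2 t u x * phi_u l1 l2 t u x)
         > - l2 / (3 * (l1 - l2)) * integral {t..u} (phi_u l1 l2 t u)"
proof -
  have reflect: "integral {t..u} f = integral {t..u} (\<lambda>x. f (t + u - x))"
    if "continuous_on {t..u} f" for f :: "real \<Rightarrow> real"
    using integral_reflect_interval[OF integrable_continuous_interval[OF that]] by simp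
  have cont: "continuous_on {t..u} (phi_t l1 l2 t u)" "continuous_on {t..u} (phi_u l1 l2 t u)"
    using continuous_on_phi[OF assms] by auto
  have "integral {t..u} (\<lambda>x. phi_t (- l2) (- l1) t u x * phi_t (- l2) (- l1) t u x)
         - integral {t..u} (\<lambda>x. phi_t (- l2) (- l1) t u x * phi_u (- l2) (- l1) t u x)
        > - l2 / (3 * (- l2 - - l1)) * integral {t..u} (phi_t (- l2) (- l1) t u)"
    by (rule phi_t_gram_gap) (use assms in auto)
  moreover have "- l2 - - l1 = l1 - l2" by simp
  ultimately show ?thesis
    using reflect[of "\<lambda>x. phi_u l1 l2 t u x * phi_u l1 l2 t u x"]
      reflect[of "\<lambda>x. phi_t l1 l2 t u x * phi_u l1 l2 t u x"] reflect[of "phi_u l1 l2 t u"] cont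
    by (simp add: phi_reflect continuous_on_mult mult.commute)
qed

section \<open>Diagonally dominant tridiagonal systems\<close>

definition tridiag_row :: "nat \<Rightarrow> (nat \<Rightarrow> real) \<Rightarrow> (nat \<Rightarrow> real) \<Rightarrow> (nat \<Rightarrow> real) \<Rightarrow> nat \<Rightarrow> real" where
  "tridiag_row n d e v j =
     d j * v j + (if 0 < j then e (j-1) * v (j-1) else 0) + (if Suc j < n then e j * v (Suc j) else 0)"

definition offdiag_sum :: "nat \<Rightarrow> (nat \<Rightarrow> real) \<Rightarrow> nat \<Rightarrow> real" where
  "offdiag_sum n e j = (if 0 < j then e (j-1) else 0) + (if Suc j < n then e j else 0)"

lemma tridiag_solvable:
  assumes "\<forall>j<n. 0 \<le> e j" and "\<forall>j<n. offdiag_sum n e j < d j"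
  shows "\<exists>v. \<forall>j<n. tridiag_row n d e v j = b j"
  using assms
proof (induction n arbitrary: d e b)
  case 0
  then show ?case by simp
next
  case (Suc n)
  show ?case
  proof (cases "n = 0")
    case True
    have "d 0 > 0" using Suc.prems(2) True by (auto simp: offdiag_sum_def)
    then show ?thesis using True
      by (intro exI[of _ "\<lambda>_. b 0 / d 0"]) (auto simp: tridiag_row_def)
  next
    case False
    have e0: "0 \<le> e 0" using Suc.prems(1) by auto
    have d0: "e 0 < d 0" using Suc.prems(2)[rule_format, of 0] False by (auto simp: offdiag_sum_def)
    have d1: "e 0 + (if Suc (Suc 0) < Suc n then e 1 else 0) < d 1"
      using Suc.prems(2)[rule_format, of 1] False by (auto simp: offdiag_sum_def)
    have "e 0 * e 0 / d 0 \<le> e 0"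
      using e0 d0 by (simp add: divide_le_eq mult_left_mono)
    \<comment> \<open>Gaussian elimination of the first unknown keeps the system tridiagonal and dominant.\<close>
    define d' where "d' j = (if j = 0 then d 1 - e 0 * e 0 / d 0 else d (Suc j))" for j
    define e' where "e' j = e (Suc j)" for j
    define b' where "b' j = (if j = 0 then b 1 - e 0 * b 0 / d 0 else b (Suc j))" for j
    have "\<forall>j<n. 0 \<le> e' j" using Suc.prems(1) by (auto simp: e'_def)
    moreover have "\<forall>j<n. offdiag_sum n e' j < d' j"
    proof (intro allI impI)
      fix j assume "j < n"
      then show "offdiag_sum n e' j < d' j"
        using d1 \<open>e 0 * e 0 / d 0 \<le> e 0\<close> Suc.prems(2)[rule_format, of "Suc j"]
        by (cases "j = 0") (auto simp: offdiag_sum_def d'_def e'_def)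
    qed
    ultimately obtain v' where v': "\<forall>j<n. tridiag_row n d' e' v' j = b' j"
      using Suc.IH by blast
    define v where "v j = (if j = 0 then (b 0 - e 0 * v' 0) / d 0 else v' (j-1))" for j
    have "tridiag_row (Suc n) d e v j = b j" if "j < Suc n" for j
    proof (cases j)
      case 0
      then show ?thesis using False e0 d0 by (simp add: tridiag_row_def v_def field_simps)
    next
      case (Suc k)
      then have "tridiag_row n d' e' v' k = b' k" using v' that by auto
      then show ?thesis using Suc e0 d0
        by (cases "k = 0") (auto simp: tridiag_row_def v_def d'_def e'_def b'_def field_simps split: if_splits)
    qed
    then show ?thesis by blast
  qed
qed

lemma tridiag_solution_bound:
  fixes c :: real
  assumes e: "\<forall>j<n. 0 \<le> e j" and sol: "\<forall>j<n. tridiag_row n d e v j = b j"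
    and b: "\<forall>j<n. \<bar>b j\<bar> \<le> r j" and dom: "\<forall>j<n. c * r j < d j - offdiag_sum n e j"
    and "c > 0" and "j < n"
  shows "\<bar>v j\<bar> \<le> 1 / c"
proof -
  \<comment> \<open>Look at the row of an entry of maximal modulus.\<close>
  define M where "M = Max ((\<lambda>i. \<bar>v i\<bar>) ` {..<n})"
  have "M \<in> (\<lambda>i. \<bar>v i\<bar>) ` {..<n}"
    unfolding M_def using \<open>j < n\<close> by (intro Max_in) auto
  then obtain k where "k < n" and "\<bar>v k\<bar> = M" by auto
  have kmax: "\<bar>v i\<bar> \<le> \<bar>v k\<bar>" if "i < n" for i
    unfolding \<open>\<bar>v k\<bar> = M\<close> M_def using that by (intro Max_ge) auto
  define L where "L = (if 0 < k then e (k-1) * v (k-1) else 0)"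
  define R where "R = (if Suc k < n then e k * v (Suc k) else 0)"
  have "\<bar>L\<bar> \<le> (if 0 < k then e (k-1) else 0) * \<bar>v k\<bar>"
    using e kmax[of "k-1"] \<open>k < n\<close> by (auto simp: L_def abs_mult intro: mult_left_mono)
  moreover have "\<bar>R\<bar> \<le> (if Suc k < n then e k else 0) * \<bar>v k\<bar>"
    using e kmax[of "Suc k"] \<open>k < n\<close> by (auto simp: R_def abs_mult intro: mult_left_mono)
  ultimately have LR: "\<bar>L\<bar> + \<bar>R\<bar> \<le> offdiag_sum n e k * \<bar>v k\<bar>"
    unfolding offdiag_sum_def by (simp add: distrib_right)
  have "d k * v k = b k - L - R"
    using sol \<open>k < n\<close> by (simp add: tridiag_row_def L_def R_def algebra_simps)
  have "d k * \<bar>v k\<bar> \<le> \<bar>d k * v k\<bar>"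
    by (simp add: abs_mult mult_right_mono)
  also have "\<dots> \<le> \<bar>b k\<bar> + \<bar>L\<bar> + \<bar>R\<bar>"
    unfolding \<open>d k * v k = b k - L - R\<close>
    using abs_triangle_ineq4[of "b k - L" R] abs_triangle_ineq4[of "b k" L] by linarith
  also have "\<dots> \<le> r k + offdiag_sum n e k * \<bar>v k\<bar>"
    using LR b \<open>k < n\<close> by auto
  finally have "(d k - offdiag_sum n e k) * \<bar>v k\<bar> \<le> r k"
    by (simp add: algebra_simps)
  moreover have gap: "c * r k < d k - offdiag_sum n e k" and "0 \<le> r k"
    using dom b \<open>k < n\<close> by (auto intro: order_trans[OF abs_ge_zero])
  ultimately have "c * \<bar>v k\<bar> * (d k - offdiag_sum n e k) < 1 * (d k - offdiag_sum n e k)"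
    using \<open>c > 0\<close> by (smt (verit) mult.assoc mult.commute mult_left_mono)
  moreover have "0 < d k - offdiag_sum n e k"
    using gap \<open>c > 0\<close> \<open>0 \<le> r k\<close> by (smt (verit) mult_nonneg_nonneg)
  ultimately have "c * \<bar>v k\<bar> < 1"
    using mult_less_cancel_right_pos by blast
  then have "c * \<bar>v j\<bar> < 1"
    using mult_left_mono[OF kmax[OF \<open>j < n\<close>], of c] \<open>c > 0\<close> by linarith
  then show ?thesis
    using \<open>c > 0\<close> by (simp add: field_simps)
qed

section \<open>Uniqueness of the orthogonal projection\<close>

lemma L_splines_diff:
  assumes "s1 \<in> L_splines l1 l2 a b ts" and "s2 \<in> L_splines l1 l2 a b ts"
  shows "(\<lambda>x. s1 x - s2 x) \<in> L_splines l1 l2 a b ts"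
  unfolding L_splines_def mem_Collect_eq
proof (intro conjI allI impI)
  show "continuous_on {a..b} (\<lambda>x. s1 x - s2 x)"
    using assms by (intro continuous_on_diff) (auto simp: L_splines_def)
  fix i assume "Suc i < length ts"
  then obtain c1 c2 d1 d2 where
      "\<forall>x\<in>{ts!i..ts!Suc i}. s1 x = c1 * exp (l1 * x) + c2 * exp (l2 * x)"
      "\<forall>x\<in>{ts!i..ts!Suc i}. s2 x = d1 * exp (l1 * x) + d2 * exp (l2 * x)"
    using assms unfolding L_splines_def by blast
  then show "\<exists>c1 c2. \<forall>x\<in>{ts!i..ts!Suc i}. s1 x - s2 x = c1 * exp (l1 * x) + c2 * exp (l2 * x)"
    by (intro exI[of _ "c1 - d1"] exI[of _ "c2 - d2"]) (simp add: algebra_simps)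
qed

lemma is_spline_proj_unique:
  assumes "a < b" and s1: "is_spline_proj l1 l2 a b ts f s1" and s2: "is_spline_proj l1 l2 a b ts f s2"
    and "x \<in> {a..b}"
  shows "s1 x = s2 x"
proof -
  define w where "w x = s1 x - s2 x" for x
  have w: "w \<in> L_splines l1 l2 a b ts"
    unfolding w_def using s1 s2 by (intro L_splines_diff) (auto simp: is_spline_proj_def)
  have cont: "continuous_on {a..b} s1" "continuous_on {a..b} s2" "continuous_on {a..b} w"
    using s1 s2 w by (auto simp: is_spline_proj_def L_splines_def)
  \<comment> \<open>Both are orthogonal projections, so their difference is orthogonal to itself.\<close>
  have "integral {a..b} (\<lambda>x. w x * w x) = integral {a..b} (\<lambda>x. s1 x * w x) - integral {a..b} (\<lambda>x. s2 x * w x)"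
    unfolding integral_diff[symmetric, OF integrable_continuous_interval integrable_continuous_interval,
        OF continuous_on_mult continuous_on_mult, OF cont(1,3) cont(2,3)]
    by (simp add: w_def algebra_simps)
  also have "\<dots> = 0"
    using s1 s2 w unfolding is_spline_proj_def by (metis diff_self)
  finally have "\<forall>x\<in>{a..b}. w x * w x = 0"
    using integral_eq_0_iff[OF continuous_on_mult[OF cont(3) cont(3)] \<open>a < b\<close>] by simp
  then show ?thesis
    using \<open>x \<in> {a..b}\<close> by (simp add: w_def)
qed

lemma spline_proj_eqI:
  assumes "a < b" and "is_spline_proj l1 l2 a b ts f s" and "\<forall>x. x \<notin> {a..b} \<longrightarrow> s x = 0"
  shows "spline_proj l1 l2 a b ts f = s"
  unfolding spline_proj_def
proof (rule the_equality)
  fix s' assume "is_spline_proj l1 l2 a b ts f s' \<and> (\<forall>x. x \<notin> {a..b} \<longrightarrow> s' x = 0)"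
  then show "s' = s"
    using assms is_spline_proj_unique[OF \<open>a < b\<close>, of l1 l2 ts f s' s] by fastforce
qed (use assms in blast)

section \<open>Splines on a partition\<close>

lemma abs_integral_mult_le_integral_weight:
  fixes f w :: "real \<Rightarrow> real"
  assumes "continuous_on {a..b} f" and "continuous_on {a..b} w"
    and "\<And>x. x \<in> {a..b} \<Longrightarrow> \<bar>f x\<bar> \<le> 1" and "\<And>x. x \<in> {a..b} \<Longrightarrow> 0 \<le> w x"
  shows "\<bar>integral {a..b} (\<lambda>x. f x * w x)\<bar> \<le> integral {a..b} w"
proof -
  have "norm (integral {a..b} (\<lambda>x. f x * w x)) \<le> integral {a..b} w"
  proof (rule integral_norm_bound_integral)
    show "(\<lambda>x. f x * w x) integrable_on {a..b}" "w integrable_on {a..b}"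
      using assms by (auto intro!: integrable_continuous_interval continuous_intros)
  next
    fix x assume "x \<in> {a..b}"
    then show "norm (f x * w x) \<le> w x"
      using assms by (simp add: abs_mult mult_left_le_one_le)
  qed
  then show ?thesis by simp
qed

lemma sum_regroup_adjacent:
  fixes G X Y :: "nat \<Rightarrow> real"
  shows "(\<Sum>i<m. G i * X i + G (Suc i) * Y i) =
         (\<Sum>j<Suc m. G j * ((if j < m then X j else 0) + (if 0 < j then Y (j-1) else 0)))"
proof -
  have "(\<Sum>j<Suc m. G j * (if j < m then X j else 0)) = (\<Sum>i<m. G i * X i)"
    by (simp add: sum.lessThan_Suc)
  moreover have "(\<Sum>j<Suc m. G j * (if 0 < j then Y (j-1) else 0)) = (\<Sum>i<m. G (Suc i) * Y i)"
    by (subst sum.lessThan_Suc_shift) simp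
  ultimately show ?thesis
    by (simp add: distrib_left sum.distrib)
qed

definition dominance_const :: "real \<Rightarrow> real \<Rightarrow> real" where
  "dominance_const l1 l2 = min l1 (- l2) / (3 * (l1 - l2))"

locale Lspline_partition =
  fixes l1 l2 :: real and ts :: "real list"
  assumes l1_pos: "0 < l1" and l2_neg: "l2 < 0"
    and length_ts: "2 \<le> length ts" and ts_sorted: "sorted_wrt (<) ts"
begin

definition m :: nat where "m = length ts - 1"

abbreviation piece :: "nat \<Rightarrow> real set" where
  "piece i \<equiv> {ts!i..ts!Suc i}"

lemma length_ts_eq: "length ts = Suc m" and m_pos: "0 < m"
  using length_ts unfolding m_def by auto

lemma knot_less: "i < j \<Longrightarrow> j \<le> m \<Longrightarrow> ts!i < ts!j"
  using sorted_wrt_nth_less[OF ts_sorted] length_ts_eq by auto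

lemma knot_le: "i \<le> j \<Longrightarrow> j \<le> m \<Longrightarrow> ts!i \<le> ts!j"
  using knot_less by (cases "i = j") (auto simp: less_imp_le)

lemma piece_subset: "i < m \<Longrightarrow> piece i \<subseteq> {ts!0..ts!m}"
  using knot_le[of 0 i] knot_le[of "Suc i" m] by auto

definition phi0 :: "nat \<Rightarrow> real \<Rightarrow> real" where
  "phi0 i = phi_t l1 l2 (ts!i) (ts!Suc i)"

definition phi1 :: "nat \<Rightarrow> real \<Rightarrow> real" where
  "phi1 i = phi_u l1 l2 (ts!i) (ts!Suc i)"

lemma phi_piece_at_knots:
  assumes "i < m"
  shows "phi0 i (ts!i) = 1" "phi0 i (ts!Suc i) = 0" "phi1 i (ts!i) = 0" "phi1 i (ts!Suc i) = 1"
  unfolding phi0_def phi1_def using phi_at_endpoints[OF l1_pos l2_neg knot_less] assms by auto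

lemma continuous_on_phi_piece:
  assumes "i < m"
  shows "continuous_on S (phi0 i)" "continuous_on S (phi1 i)"
  unfolding phi0_def phi1_def using continuous_on_phi[OF l1_pos l2_neg knot_less] assms by auto

lemma phi_piece_bounds:
  assumes "i < m" "x \<in> piece i"
  shows "0 \<le> phi0 i x" "phi0 i x \<le> 1" "0 \<le> phi1 i x" "phi1 i x \<le> 1"
  unfolding phi0_def phi1_def using phi_bounds[OF l1_pos l2_neg knot_less[of i "Suc i"]] assms by auto

lemma L_spline_on_piece:
  assumes "s \<in> L_splines l1 l2 a b ts" and "i < m" and "x \<in> piece i"
  shows "s x = s (ts!i) * phi0 i x + s (ts!Suc i) * phi1 i x"
proof -
  have "\<exists>c1 c2. \<forall>x\<in>piece i. s x = c1 * exp (l1 * x) + c2 * exp (l2 * x)"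
    using assms(1,2) length_ts_eq unfolding L_splines_def by simp
  then obtain c1 c2 where "\<forall>x\<in>piece i. s x = c1 * exp (l1 * x) + c2 * exp (l2 * x)"
    by blast
  then show ?thesis
    unfolding phi0_def phi1_def
    by (intro exp_sum_interpolation[OF l1_pos l2_neg knot_less]) (use assms(2,3) in auto)
qed

lemma knots_cover:
  assumes "x \<in> {ts!0..ts!m}"
  obtains i where "i < m" and "x \<in> piece i"
proof -
  define I where "I = {i. i < m \<and> ts!i \<le> x}"
  have "finite I" "0 \<in> I" unfolding I_def using assms m_pos by auto
  define i where "i = Max I"
  have "i \<in> I" unfolding i_def using \<open>finite I\<close> \<open>0 \<in> I\<close> by (intro Max_in) auto
  have "x \<le> ts!Suc i"
  proof (rule ccontr)
    assume "\<not> x \<le> ts!Suc i"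
    then have "Suc i < m"
      using assms \<open>i \<in> I\<close> by (cases "Suc i = m") (auto simp: I_def)
    with \<open>\<not> x \<le> ts!Suc i\<close> have "Suc i \<in> I" by (auto simp: I_def)
    then show False
      using \<open>finite I\<close> by (auto simp: i_def dest: Max_ge)
  qed
  with \<open>i \<in> I\<close> show thesis using that by (auto simp: I_def)
qed

lemma Icc_eq_Union_pieces: "{ts!0..ts!m} = (\<Union>i<m. piece i)"
  using piece_subset knots_cover by blast

lemma continuous_on_Icc_if_pieces:
  assumes "\<And>i. i < m \<Longrightarrow> continuous_on (piece i) g"
  shows "continuous_on {ts!0..ts!m} g"
  unfolding Icc_eq_Union_pieces by (rule continuous_on_closed_Union) (use assms in auto)

lemma integral_eq_sum_pieces:
  fixes f :: "real \<Rightarrow> real"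
  assumes "f integrable_on {ts!0..ts!m}"
  shows "integral {ts!0..ts!m} f = (\<Sum>i<m. integral (piece i) f)"
proof -
  have "integral {ts!0..ts!k} f = (\<Sum>i<k. integral (piece i) f)" if "k \<le> m" for k
    using that
  proof (induction k)
    case (Suc k)
    have "{ts!0..ts!Suc k} \<subseteq> {ts!0..ts!m}"
      using Suc.prems knot_le[of "Suc k" m] by auto
    then have "f integrable_on {ts!0..ts!Suc k}"
      using integrable_on_subinterval[OF assms] by blast
    then have "integral {ts!0..ts!Suc k} f = integral {ts!0..ts!k} f + integral (piece k) f"
      using Suc.prems by (intro Henstock_Kurzweil_Integration.integral_combine[symmetric]) (auto intro!: knot_le)
    then show ?case using Suc by simp
  qed simp
  then show ?thesis by simp
qed

(* The spline with value v j at the knot ts!j. The pieces are half-open, so at most one summand is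
   active, the last knot is treated separately, and the function vanishes outside [ts!0, ts!m]
   as the normalisation in spline_proj requires. *)
definition nodal_spline :: "(nat \<Rightarrow> real) \<Rightarrow> real \<Rightarrow> real" where
  "nodal_spline v x =
     (\<Sum>i<m. if ts!i \<le> x \<and> x < ts!Suc i then v i * phi0 i x + v (Suc i) * phi1 i x else 0)
     + (if x = ts!m then v m else 0)"

lemma nodal_spline_half_open:
  assumes "j < m" and "ts!j \<le> x" "x < ts!Suc j"
  shows "nodal_spline v x = v j * phi0 j x + v (Suc j) * phi1 j x"
proof -
  have "(if ts!i \<le> x \<and> x < ts!Suc i then v i * phi0 i x + v (Suc i) * phi1 i x else 0) = 0"
    if "i < m" "i \<noteq> j" for i
    using that assms knot_le[of "Suc i" j] knot_le[of "Suc j" i] by (cases "i < j") auto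
  then have "(\<Sum>i<m. if ts!i \<le> x \<and> x < ts!Suc i then v i * phi0 i x + v (Suc i) * phi1 i x else 0)
      = v j * phi0 j x + v (Suc j) * phi1 j x"
    using assms by (subst sum.remove[of _ j]) (auto intro!: sum.neutral)
  moreover have "x < ts!m"
    using assms knot_le[of "Suc j" m] by auto
  ultimately show ?thesis
    unfolding nodal_spline_def by simp
qed

lemma nodal_spline_on_piece:
  assumes "i < m" and "x \<in> piece i"
  shows "nodal_spline v x = v i * phi0 i x + v (Suc i) * phi1 i x"
proof (cases "x < ts!Suc i")
  case True
  then show ?thesis using nodal_spline_half_open assms by simp
next
  case False
  then have x: "x = ts!Suc i" using assms by simp
  show ?thesis
  proof (cases "Suc i < m")
    case True
    then show ?thesis
      using nodal_spline_half_open[OF True, of x] knot_less[of "Suc i" "Suc (Suc i)"]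
        phi_piece_at_knots True assms(1) x by simp
  next
    case False
    then have "Suc i = m" using assms by simp
    have "(if ts!k \<le> ts!m \<and> ts!m < ts!Suc k then v k * phi0 k (ts!m) + v (Suc k) * phi1 k (ts!m) else 0) = 0"
      if "k < m" for k
      using that knot_le[of "Suc k" m] by auto
    then have "nodal_spline v (ts!m) = v m"
      unfolding nodal_spline_def by simp
    then show ?thesis
      using phi_piece_at_knots[OF assms(1)] x \<open>Suc i = m\<close> by simp
  qed
qed

lemma nodal_spline_outside:
  assumes "x \<notin> {ts!0..ts!m}"
  shows "nodal_spline v x = 0"
proof -
  have "(if ts!i \<le> x \<and> x < ts!Suc i then v i * phi0 i x + v (Suc i) * phi1 i x else 0) = 0"
    if "i < m" for i
    using that assms piece_subset[of i] by auto
  moreover have "x \<noteq> ts!m"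
    using assms knot_le[of 0 m] by auto
  ultimately show ?thesis
    unfolding nodal_spline_def by simp
qed

lemma nodal_spline_in_L_splines: "nodal_spline v \<in> L_splines l1 l2 (ts!0) (ts!m) ts"
  unfolding L_splines_def mem_Collect_eq
proof (intro conjI allI impI)
  show "continuous_on {ts!0..ts!m} (nodal_spline v)"
  proof (rule continuous_on_Icc_if_pieces)
    fix i assume "i < m"
    then have "continuous_on (piece i) (\<lambda>x. v i * phi0 i x + v (Suc i) * phi1 i x)"
      using continuous_on_phi_piece by (auto intro!: continuous_intros)
    then show "continuous_on (piece i) (nodal_spline v)"
      by (rule continuous_on_eq) (use nodal_spline_on_piece[OF \<open>i < m\<close>] in auto)
  qed
  fix i assume "Suc i < length ts"
  then have "i < m" using length_ts_eq by simp
  obtain c1 c2 d1 d2 where "\<forall>x. phi0 i x = c1 * exp (l1*x) + c2 * exp (l2*x)"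
      and "\<forall>x. phi1 i x = d1 * exp (l1*x) + d2 * exp (l2*x)"
    using phi_span[OF l1_pos l2_neg knot_less[of i "Suc i"]] \<open>i < m\<close> unfolding phi0_def phi1_def by auto
  then show "\<exists>c1 c2. \<forall>x\<in>piece i. nodal_spline v x = c1 * exp (l1 * x) + c2 * exp (l2 * x)"
    using nodal_spline_on_piece[OF \<open>i < m\<close>]
    by (intro exI[of _ "v i * c1 + v (Suc i) * d1"] exI[of _ "v i * c2 + v (Suc i) * d2"])
       (simp add: algebra_simps)
qed

definition gram00 :: "nat \<Rightarrow> real" where
  "gram00 i = integral (piece i) (\<lambda>x. phi0 i x * phi0 i x)"
definition gram11 :: "nat \<Rightarrow> real" where
  "gram11 i = integral (piece i) (\<lambda>x. phi1 i x * phi1 i x)"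
definition gram01 :: "nat \<Rightarrow> real" where
  "gram01 i = integral (piece i) (\<lambda>x. phi0 i x * phi1 i x)"
definition mass0 :: "nat \<Rightarrow> real" where
  "mass0 i = integral (piece i) (phi0 i)"
definition mass1 :: "nat \<Rightarrow> real" where
  "mass1 i = integral (piece i) (phi1 i)"
definition load0 :: "(real \<Rightarrow> real) \<Rightarrow> nat \<Rightarrow> real" where
  "load0 f i = integral (piece i) (\<lambda>x. f x * phi0 i x)"
definition load1 :: "(real \<Rightarrow> real) \<Rightarrow> nat \<Rightarrow> real" where
  "load1 f i = integral (piece i) (\<lambda>x. f x * phi1 i x)"

(* Row j <= m of the Gram system of the nodal basis: the basis function of the knot j lives on
   the pieces j - 1 (as phi1) and j (as phi0). *)
definition gram_diag :: "nat \<Rightarrow> real" where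
  "gram_diag j = (if 0 < j then gram11 (j-1) else 0) + (if j < m then gram00 j else 0)"
definition gram_offdiag :: "nat \<Rightarrow> real" where
  "gram_offdiag j = (if j < m then gram01 j else 0)"
definition mass :: "nat \<Rightarrow> real" where
  "mass j = (if 0 < j then mass1 (j-1) else 0) + (if j < m then mass0 j else 0)"
definition load :: "(real \<Rightarrow> real) \<Rightarrow> nat \<Rightarrow> real" where
  "load f j = (if 0 < j then load1 f (j-1) else 0) + (if j < m then load0 f j else 0)"

lemma piece_gram_dominance:
  assumes "i < m"
  shows "dominance_const l1 l2 * mass0 i < gram00 i - gram01 i"
    and "dominance_const l1 l2 * mass1 i < gram11 i - gram01 i"
    and "0 \<le> gram01 i" and "0 \<le> mass0 i" and "0 \<le> mass1 i"
proof -
  have nonneg: "0 \<le> phi0 i x" "0 \<le> phi1 i x" if "x \<in> piece i" for x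
    using phi_piece_bounds[OF assms that] by auto
  have cont: "continuous_on (piece i) (phi0 i)" "continuous_on (piece i) (phi1 i)"
    using continuous_on_phi_piece[OF assms] by auto
  show "0 \<le> gram01 i" "0 \<le> mass0 i" "0 \<le> mass1 i"
    unfolding gram01_def mass0_def mass1_def using nonneg cont
    by (auto intro!: integral_nonneg integrable_continuous_interval continuous_intros)
  have knots: "ts!i < ts!Suc i"
    using knot_less assms by simp
  have "dominance_const l1 l2 \<le> l1 / (3 * (l1 - l2))"
    unfolding dominance_const_def by (rule divide_right_mono) (use l1_pos l2_neg in auto)
  then have "dominance_const l1 l2 * mass0 i \<le> l1 / (3 * (l1 - l2)) * mass0 i"
    using \<open>0 \<le> mass0 i\<close> by (rule mult_right_mono)
  then show "dominance_const l1 l2 * mass0 i < gram00 i - gram01 i"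
    using phi_t_gram_gap[OF l1_pos l2_neg knots]
    unfolding gram00_def gram01_def mass0_def phi0_def phi1_def by linarith
  have "dominance_const l1 l2 \<le> - l2 / (3 * (l1 - l2))"
    unfolding dominance_const_def by (rule divide_right_mono) (use l1_pos l2_neg in auto)
  then have "dominance_const l1 l2 * mass1 i \<le> - l2 / (3 * (l1 - l2)) * mass1 i"
    using \<open>0 \<le> mass1 i\<close> by (rule mult_right_mono)
  then show "dominance_const l1 l2 * mass1 i < gram11 i - gram01 i"
    using phi_u_gram_gap[OF l1_pos l2_neg knots]
    unfolding gram11_def gram01_def mass1_def phi0_def phi1_def by linarith
qed

lemma gram_offdiag_nonneg: "0 \<le> gram_offdiag j"
  using piece_gram_dominance(3) by (simp add: gram_offdiag_def)

lemma gram_row_dominance: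
  assumes "j < Suc m"
  shows "dominance_const l1 l2 * mass j < gram_diag j - offdiag_sum (Suc m) gram_offdiag j"
proof -
  have "gram_diag j - offdiag_sum (Suc m) gram_offdiag j =
      (if 0 < j then gram11 (j-1) - gram01 (j-1) else 0) + (if j < m then gram00 j - gram01 j else 0)"
    unfolding gram_diag_def offdiag_sum_def gram_offdiag_def using assms by auto
  moreover have "0 < j \<or> j < m" using m_pos by auto
  ultimately show ?thesis
    using piece_gram_dominance(1,2)[of j] piece_gram_dominance(2)[of "j-1"] assms
    unfolding mass_def by (auto simp: distrib_left intro: add_strict_mono)
qed

lemma mass_nonneg: "j < Suc m \<Longrightarrow> 0 \<le> mass j"
  unfolding mass_def using piece_gram_dominance(4,5) by auto

lemma gram_system_solvable: "\<exists>v. \<forall>j<Suc m. tridiag_row (Suc m) gram_diag gram_offdiag v j = load f j"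
proof (rule tridiag_solvable)
  show "\<forall>j<Suc m. 0 \<le> gram_offdiag j"
    using gram_offdiag_nonneg by auto
  have "0 \<le> dominance_const l1 l2 * mass j" if "j < Suc m" for j
    unfolding dominance_const_def using l1_pos l2_neg mass_nonneg[OF that] by simp
  then show "\<forall>j<Suc m. offdiag_sum (Suc m) gram_offdiag j < gram_diag j"
    using gram_row_dominance by (smt (verit))
qed

lemma abs_load_le_mass:
  assumes "continuous_on {ts!0..ts!m} f" and "\<forall>x\<in>{ts!0..ts!m}. \<bar>f x\<bar> \<le> 1" and "j < Suc m"
  shows "\<bar>load f j\<bar> \<le> mass j"
proof -
  have "\<bar>load0 f i\<bar> \<le> mass0 i" "\<bar>load1 f i\<bar> \<le> mass1 i" if "i < m" for i
    unfolding load0_def load1_def mass0_def mass1_def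
    using assms piece_subset[OF that] continuous_on_phi_piece[OF that] phi_piece_bounds[OF that]
    by (auto intro!: abs_integral_mult_le_integral_weight elim: continuous_on_subset)
  then have "\<bar>if 0 < j then load1 f (j-1) else 0\<bar> \<le> (if 0 < j then mass1 (j-1) else 0)"
      and "\<bar>if j < m then load0 f j else 0\<bar> \<le> (if j < m then mass0 j else 0)"
    using \<open>j < Suc m\<close> by auto
  then show ?thesis
    unfolding load_def mass_def by linarith
qed

lemma continuous_on_nodal_spline: "continuous_on {ts!0..ts!m} (nodal_spline v)"
  using nodal_spline_in_L_splines unfolding L_splines_def by simp

lemma integral_piece_mult_L_spline:
  assumes f: "continuous_on {ts!0..ts!m} f" and g: "g \<in> L_splines l1 l2 a b ts" and "i < m"
  shows "integral (piece i) (\<lambda>x. f x * g x) = g (ts!i) * load0 f i + g (ts!Suc i) * load1 f i"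
proof -
  have "continuous_on (piece i) f"
    using continuous_on_subset[OF f piece_subset[OF \<open>i < m\<close>]] .
  then have "integral (piece i) (\<lambda>x. f x * g x) =
      integral (piece i) (\<lambda>x. g (ts!i) * (f x * phi0 i x) + g (ts!Suc i) * (f x * phi1 i x))"
    using continuous_on_phi_piece[OF \<open>i < m\<close>]
    by (intro integral_cong) (subst L_spline_on_piece[OF g \<open>i < m\<close>], auto simp: algebra_simps)
  also have "\<dots> = g (ts!i) * load0 f i + g (ts!Suc i) * load1 f i"
    unfolding load0_def load1_def using \<open>continuous_on (piece i) f\<close> continuous_on_phi_piece[OF \<open>i < m\<close>]
    by (subst integral_add) (auto intro!: integrable_continuous_interval continuous_intros)
  finally show ?thesis .
qed

lemma integral_mult_L_spline:
  assumes f: "continuous_on {ts!0..ts!m} f" and g: "g \<in> L_splines l1 l2 (ts!0) (ts!m) ts"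
  shows "integral {ts!0..ts!m} (\<lambda>x. f x * g x) = (\<Sum>j<Suc m. g (ts!j) * load f j)"
proof -
  have "continuous_on {ts!0..ts!m} g"
    using g unfolding L_splines_def by simp
  then have "integral {ts!0..ts!m} (\<lambda>x. f x * g x) = (\<Sum>i<m. integral (piece i) (\<lambda>x. f x * g x))"
    using f by (intro integral_eq_sum_pieces integrable_continuous_interval continuous_intros)
  also have "\<dots> = (\<Sum>i<m. g (ts!i) * load0 f i + g (ts!Suc i) * load1 f i)"
    using integral_piece_mult_L_spline[OF f g] by simp
  also have "\<dots> = (\<Sum>j<Suc m. g (ts!j) * ((if j < m then load0 f j else 0) + (if 0 < j then load1 f (j-1) else 0)))"
    by (rule sum_regroup_adjacent)
  also have "\<dots> = (\<Sum>j<Suc m. g (ts!j) * load f j)"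
    unfolding load_def by (simp add: add.commute)
  finally show ?thesis .
qed

lemma load_nodal_spline:
  assumes "j < Suc m"
  shows "load (nodal_spline v) j = tridiag_row (Suc m) gram_diag gram_offdiag v j"
proof -
  have "load0 (nodal_spline v) i = v i * gram00 i + v (Suc i) * gram01 i"
      and "load1 (nodal_spline v) i = v i * gram01 i + v (Suc i) * gram11 i" if "i < m" for i
  proof -
    have cont: "continuous_on (piece i) (phi0 i)" "continuous_on (piece i) (phi1 i)"
      using continuous_on_phi_piece[OF that] by auto
    have "load0 (nodal_spline v) i =
        integral (piece i) (\<lambda>x. v i * (phi0 i x * phi0 i x) + v (Suc i) * (phi0 i x * phi1 i x))"
      unfolding load0_def by (intro integral_cong) (simp add: nodal_spline_on_piece[OF that] algebra_simps)
    also have "\<dots> = v i * gram00 i + v (Suc i) * gram01 i"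
      unfolding gram00_def gram01_def using cont
      by (subst integral_add) (auto intro!: integrable_continuous_interval continuous_intros)
    finally show "load0 (nodal_spline v) i = v i * gram00 i + v (Suc i) * gram01 i" .
    have "load1 (nodal_spline v) i =
        integral (piece i) (\<lambda>x. v i * (phi0 i x * phi1 i x) + v (Suc i) * (phi1 i x * phi1 i x))"
      unfolding load1_def by (intro integral_cong) (simp add: nodal_spline_on_piece[OF that] algebra_simps)
    also have "\<dots> = v i * gram01 i + v (Suc i) * gram11 i"
      unfolding gram11_def gram01_def using cont
      by (subst integral_add) (auto intro!: integrable_continuous_interval continuous_intros)
    finally show "load1 (nodal_spline v) i = v i * gram01 i + v (Suc i) * gram11 i" .
  qed
  then show ?thesis
    using assms m_pos
    by (auto simp: load_def tridiag_row_def gram_diag_def gram_offdiag_def algebra_simps)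
qed

lemma nodal_spline_is_spline_proj:
  assumes f: "continuous_on {ts!0..ts!m} f"
    and v: "\<forall>j<Suc m. tridiag_row (Suc m) gram_diag gram_offdiag v j = load f j"
  shows "is_spline_proj l1 l2 (ts!0) (ts!m) ts f (nodal_spline v)"
  unfolding is_spline_proj_def
  using nodal_spline_in_L_splines integral_mult_L_spline[OF f]
    integral_mult_L_spline[OF continuous_on_nodal_spline] load_nodal_spline v
  by simp

lemma spline_proj_bounded:
  assumes f: "continuous_on {ts!0..ts!m} f" and f_le: "\<forall>x\<in>{ts!0..ts!m}. \<bar>f x\<bar> \<le> 1"
    and x: "x \<in> {ts!0..ts!m}"
  shows "\<bar>spline_proj l1 l2 (ts!0) (ts!m) ts f x\<bar> \<le> 2 / dominance_const l1 l2"
proof -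
  let ?c = "dominance_const l1 l2"
  have "?c > 0"
    unfolding dominance_const_def using l1_pos l2_neg by simp
  obtain v where v: "\<forall>j<Suc m. tridiag_row (Suc m) gram_diag gram_offdiag v j = load f j"
    using gram_system_solvable by blast
  have proj: "spline_proj l1 l2 (ts!0) (ts!m) ts f = nodal_spline v"
    using knot_less[OF m_pos] nodal_spline_is_spline_proj[OF f v] nodal_spline_outside
    by (intro spline_proj_eqI) auto
  have v_le: "\<bar>v j\<bar> \<le> 1 / ?c" if "j < Suc m" for j
    using gram_offdiag_nonneg v abs_load_le_mass[OF f f_le] gram_row_dominance \<open>?c > 0\<close> that
    by (intro tridiag_solution_bound[where r = mass]) auto
  obtain i where "i < m" and "x \<in> piece i"
    using knots_cover[OF x] .
  then have "\<bar>spline_proj l1 l2 (ts!0) (ts!m) ts f x\<bar> = \<bar>v i * phi0 i x + v (Suc i) * phi1 i x\<bar>"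
    unfolding proj by (simp add: nodal_spline_on_piece)
  also have "\<dots> \<le> \<bar>v i\<bar> * phi0 i x + \<bar>v (Suc i)\<bar> * phi1 i x"
    using abs_triangle_ineq[of "v i * phi0 i x" "v (Suc i) * phi1 i x"]
      phi_piece_bounds[OF \<open>i < m\<close> \<open>x \<in> piece i\<close>] by (simp add: abs_mult)
  also have "\<dots> \<le> 1 / ?c * 1 + 1 / ?c * 1"
    using v_le[of i] v_le[of "Suc i"] phi_piece_bounds[OF \<open>i < m\<close> \<open>x \<in> piece i\<close>] \<open>i < m\<close> \<open>?c > 0\<close>
    by (intro add_mono mult_mono) auto
  finally show ?thesis by simp
qed

end

theorem mainTheorem2:
  fixes l1 l2 :: real
  assumes "l1 > 0" and "l2 < 0"
  shows "\<exists>C::real. \<forall>a b ts. is_partition a b ts \<longrightarrow>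
           (\<forall>f. continuous_on {a..b} f \<and> (\<forall>x\<in>{a..b}. \<bar>f x\<bar> \<le> 1) \<longrightarrow>
              (\<forall>x\<in>{a..b}. \<bar>spline_proj l1 l2 a b ts f x\<bar> \<le> C))"
proof (intro exI[of _ "2 / dominance_const l1 l2"] allI impI ballI)
  fix a b x :: real and ts :: "real list" and f :: "real \<Rightarrow> real"
  assume part: "is_partition a b ts" and f: "continuous_on {a..b} f \<and> (\<forall>x\<in>{a..b}. \<bar>f x\<bar> \<le> 1)"
    and x: "x \<in> {a..b}"
  have "2 \<le> length ts" and "sorted_wrt (<) ts"
    using part by (auto simp: is_partition_def)
  then interpret Lspline_partition l1 l2 ts
    using assms by unfold_locales
  have "ts \<noteq> []"
    using length_ts_eq by auto
  then have "a = ts!0" and "b = ts!m"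
    using part length_ts_eq by (auto simp: is_partition_def hd_conv_nth last_conv_nth)
  then show "\<bar>spline_proj l1 l2 a b ts f x\<bar> \<le> 2 / dominance_const l1 l2"
    using spline_proj_bounded f x by simp
qed

end
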